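(* Let $F_\epsilon$ be a smooth near-identity family of maps on a domain $D\subset\mathbb R^m$ which is reversible with a linear reversor $R$, i.e. $R:\mathbb R^m\to\mathbb R^m$ is linear with $R\circ R=\mathrm I$ and $F_\epsilon^{-1}=R\circ F_\epsilon\circ R$. Then the interpolating vector field $X_n$ of $F_\epsilon$ is reversible: $X_n(Rx,\epsilon)=-R\,X_n(x,\epsilon)$ (whenever both sides are defined).
   Context: For $\epsilon\neq0$ and a point $x$ whose iterates $x_k=F_\epsilon^k(x)$, $|k|\le n$, are defined (negative $k$ meaning iterates of $F_\epsilon^{-1}$), the interpolating vector field is $$X_n(x,\epsilon)=\epsilon^{-1}\sum_{k=1}^n p_{nk}\bigl(x_k-x_{-k}\bigr),\qquad p_{nk}=\frac{(-1)^{k+1}(n!)^2}{k(n+k)!(n-k)!}.$$ *)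

theory Defs
  imports "HOL-Analysis.Analysis"
begin

fun dderiv :: "'a::real_normed_vector list \<Rightarrow> ('a \<Rightarrow> 'b::real_normed_vector) \<Rightarrow> 'a \<Rightarrow> 'b" where
  "dderiv [] f = f"
| "dderiv (v # vs) f = (\<lambda>x. vector_derivative (\<lambda>t. dderiv vs f (x + t *\<^sub>R v)) (at 0))"

definition smooth_on :: "'a::real_normed_vector set \<Rightarrow> ('a \<Rightarrow> 'b::real_normed_vector) \<Rightarrow> bool" where
  "smooth_on U f \<longleftrightarrow> (\<forall>vs. dderiv vs f differentiable_on U)"

definition pcoef :: "nat \<Rightarrow> nat \<Rightarrow> real" where
  "pcoef n k = (-1) ^ (k + 1) * (fact n)\<^sup>2 / (real k * fact (n + k) * fact (n - k))"

text \<open>Interpolating vector field for forward map f and backward map g (= F^{-1}).\<close>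
definition interp_vf :: "nat \<Rightarrow> ('a::real_vector \<Rightarrow> 'a) \<Rightarrow> ('a \<Rightarrow> 'a) \<Rightarrow> real \<Rightarrow> 'a \<Rightarrow> 'a" where
  "interp_vf n f g \<epsilon> x = (1 / \<epsilon>) *\<^sub>R (\<Sum>k = 1..n. pcoef n k *\<^sub>R ((f ^^ k) x - (g ^^ k) x))"

text \<open>The iterates x_1..x_n of x under a partial map with domain A are defined.\<close>
definition iterates_defined :: "'a set \<Rightarrow> ('a \<Rightarrow> 'a) \<Rightarrow> nat \<Rightarrow> 'a \<Rightarrow> bool" where
  "iterates_defined A f n x \<longleftrightarrow> (\<forall>k<n. (f ^^ k) x \<in> A)"

end

theory Submission
  imports Defs
begin

(* A reversor R conjugates F and its inverse G to each other: R o G = F o R and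
   R o F = G o R. Hence the forward iterates of R x are the images under R of the
   backward iterates of x and vice versa, i.e. R swaps x_k and x_(-k). By linearity of
   R every difference x_k - x_(-k), and with it X_n, changes sign. *)

lemma funpow_conj_on_orbit:
  assumes conj: "\<And>y. y \<in> A \<Longrightarrow> h (R y) = R (g y)"
    and orbit: "iterates_defined A g n x"
    and "k \<le> n"
  shows "(h ^^ k) (R x) = R ((g ^^ k) x)"
  using \<open>k \<le> n\<close>
proof (induction k)
  case (Suc k)
  then have "(g ^^ k) x \<in> A" using orbit unfolding iterates_defined_def by simp
  then show ?case using Suc by (simp add: conj)
qed simp

lemma interp_vf_reversible:
  assumes "linear R"
    and f_orbit: "\<And>k. k \<le> n \<Longrightarrow> (f ^^ k) (R x) = R ((g ^^ k) x)"
    and g_orbit: "\<And>k. k \<le> n \<Longrightarrow> (g ^^ k) (R x) = R ((f ^^ k) x)"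
  shows "interp_vf n f g \<epsilon> (R x) = - R (interp_vf n f g \<epsilon> x)"
proof -
  have "(f ^^ k) (R x) - (g ^^ k) (R x) = - R ((f ^^ k) x - (g ^^ k) x)"
    if "k \<in> {1..n}" for k
    using that f_orbit g_orbit linear_diff[OF \<open>linear R\<close>] by simp
  then have "interp_vf n f g \<epsilon> (R x)
      = (1 / \<epsilon>) *\<^sub>R (\<Sum>k = 1..n. pcoef n k *\<^sub>R - R ((f ^^ k) x - (g ^^ k) x))"
    unfolding interp_vf_def by simp
  also have "\<dots> = - R (interp_vf n f g \<epsilon> x)"
    unfolding interp_vf_def
    by (simp add: linear_scale[OF \<open>linear R\<close>] linear_sum[OF \<open>linear R\<close>] sum_negf)
  finally show ?thesis .
qed

theorem mainTheorem6:
  fixes F :: "real \<Rightarrow> 'a::euclidean_space \<Rightarrow> 'a"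
    and D :: "'a set" and R :: "'a \<Rightarrow> 'a" and e0 :: real
  assumes D_open: "open D"
    and e0_pos: "e0 > 0"
    and smooth: "smooth_on ({-e0<..<e0} \<times> D) (\<lambda>(\<epsilon>, x). F \<epsilon> x)"
    and near_id: "\<And>x. x \<in> D \<Longrightarrow> F 0 x = x"
    and R_linear: "linear R"
    and R_invol: "R \<circ> R = id"
    and F_inj: "\<And>\<epsilon>. \<bar>\<epsilon>\<bar> < e0 \<Longrightarrow> inj_on (F \<epsilon>) D"
    and rev_dom: "\<And>\<epsilon>. \<bar>\<epsilon>\<bar> < e0 \<Longrightarrow> F \<epsilon> ` D = R ` D"
    and rev_map: "\<And>\<epsilon> y. \<bar>\<epsilon>\<bar> < e0 \<Longrightarrow> y \<in> F \<epsilon> ` D \<Longrightarrow>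
                    the_inv_into D (F \<epsilon>) y = R (F \<epsilon> (R y))"
    and eps: "\<epsilon> \<noteq> 0" "\<bar>\<epsilon>\<bar> < e0"
    and def_x: "iterates_defined D (F \<epsilon>) n x"
               "iterates_defined (F \<epsilon> ` D) (the_inv_into D (F \<epsilon>)) n x"
    and def_Rx: "iterates_defined D (F \<epsilon>) n (R x)"
               "iterates_defined (F \<epsilon> ` D) (the_inv_into D (F \<epsilon>)) n (R x)"
  shows "interp_vf n (F \<epsilon>) (the_inv_into D (F \<epsilon>)) \<epsilon> (R x)
           = - R (interp_vf n (F \<epsilon>) (the_inv_into D (F \<epsilon>)) \<epsilon> x)"
proof (rule interp_vf_reversible[OF R_linear])
  define g where "g = the_inv_into D (F \<epsilon>)"
  have RR: "R (R y) = y" for y using R_invol by (metis comp_apply id_apply)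
  have g_conj: "R (g y) = F \<epsilon> (R y)" if "y \<in> F \<epsilon> ` D" for y
    using rev_map[OF eps(2) that] RR unfolding g_def by simp
  show "(F \<epsilon> ^^ k) (R x) = R ((g ^^ k) x)" if "k \<le> n" for k
    using funpow_conj_on_orbit[of "F \<epsilon> ` D" "F \<epsilon>" R g, OF _ def_x(2)[folded g_def] that]
      g_conj by metis
  have F_conj: "g (R y) = R (F \<epsilon> y)" if "y \<in> D" for y
  proof -
    have "R y \<in> F \<epsilon> ` D" using that rev_dom[OF eps(2)] by simp
    then show ?thesis using g_conj RR by metis
  qed
  show "(g ^^ k) (R x) = R ((F \<epsilon> ^^ k) x)" if "k \<le> n" for k
    using funpow_conj_on_orbit[of D g R "F \<epsilon>", OF F_conj def_x(1) that] .
qed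

end
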